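(* There exists $n_0$ such that for all positive integers $N$ and $k$ with $n := \binom{N}{k} \ge n_0$ and $k \le \sqrt[3]{\ln n}$, there exists a tournament $T$ on $N$ nodes whose auxiliary bipartite graph $G(T)$ is $k$-covered.
   Context: Let $T=(V,E)$ be a tournament on $N$ nodes and let $k \le N$ be a positive integer. The auxiliary bipartite digraph $G(T)$ has vertex set $R \cup C$, where $R$ contains one vertex for each node of $T$ and $C$ contains one vertex for each $k$-element subset of $V$. Its arcs are: for each $X = \{v_1,\dots,v_k\} \in C$, the arcs $(v_i, X)$ for $1 \le i \le k$; and for each $u \in R$ and $X \in C$, the arc $(X, u)$ if and only if $u$ dominates $X$ in $T$, i.e. $(u, v_i) \in E$ for all $v_i \in X$. A set of vertices $W = \{w_1,\dots,w_t\}$ of a digraph is covered if there is a vertex $y$ such that $(w_j, y)$ is an arc for all $1 \le j \le t$. A bipartite digraph is $k$-covered if every collection of $k$ vertices lying on the same side of the bipartition is covered. Here $\ln$ is the natural logarithm. *)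

theory Defs
  imports Complex_Main
begin

definition tournament :: "nat \<Rightarrow> (nat \<Rightarrow> nat \<Rightarrow> bool) \<Rightarrow> bool" where
  "tournament N E \<longleftrightarrow>
     (\<forall>u v. E u v \<longrightarrow> u < N \<and> v < N) \<and>
     (\<forall>u<N. \<not> E u u) \<and>
     (\<forall>u<N. \<forall>v<N. u \<noteq> v \<longrightarrow> (E u v \<longleftrightarrow> \<not> E v u))"

type_synonym gvert = "nat + nat set"

definition G_R :: "nat \<Rightarrow> gvert set" where
  "G_R N = Inl ` {0..<N}"

definition G_C :: "nat \<Rightarrow> nat \<Rightarrow> gvert set" where
  "G_C N k = Inr ` {X. X \<subseteq> {0..<N} \<and> card X = k}"

definition G_verts :: "nat \<Rightarrow> nat \<Rightarrow> gvert set" where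
  "G_verts N k = G_R N \<union> G_C N k"

definition dominates :: "(nat \<Rightarrow> nat \<Rightarrow> bool) \<Rightarrow> nat \<Rightarrow> nat set \<Rightarrow> bool" where
  "dominates E u X \<longleftrightarrow> (\<forall>v\<in>X. E u v)"

definition G_arc :: "nat \<Rightarrow> nat \<Rightarrow> (nat \<Rightarrow> nat \<Rightarrow> bool) \<Rightarrow> gvert \<Rightarrow> gvert \<Rightarrow> bool" where
  "G_arc N k E a b \<longleftrightarrow>
     (\<exists>v X. a = Inl v \<and> b = Inr X \<and> a \<in> G_R N \<and> b \<in> G_C N k \<and> v \<in> X) \<or>
     (\<exists>X u. a = Inr X \<and> b = Inl u \<and> a \<in> G_C N k \<and> b \<in> G_R N \<and> dominates E u X)"

definition covered :: "'v set \<Rightarrow> ('v \<Rightarrow> 'v \<Rightarrow> bool) \<Rightarrow> 'v set \<Rightarrow> bool" where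
  "covered Vs A W \<longleftrightarrow> (\<exists>y\<in>Vs. \<forall>w\<in>W. A w y)"

definition k_covered :: "nat \<Rightarrow> 'v set \<Rightarrow> 'v set \<Rightarrow> ('v \<Rightarrow> 'v \<Rightarrow> bool) \<Rightarrow> bool" where
  "k_covered k P Q A \<longleftrightarrow>
     (\<forall>W. (W \<subseteq> P \<or> W \<subseteq> Q) \<and> card W = k \<longrightarrow> covered (P \<union> Q) A W)"

definition GT_k_covered :: "nat \<Rightarrow> nat \<Rightarrow> (nat \<Rightarrow> nat \<Rightarrow> bool) \<Rightarrow> bool" where
  "GT_k_covered N k E \<longleftrightarrow> k_covered k (G_R N) (G_C N k) (G_arc N k E)"

end

theory Submission
  imports Defs "HOL-Real_Asymp.Real_Asymp"
begin

text \<open>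
  A k-set of nodes is covered in G(T) by itself, so only collections of k elements of C matter;
  such a collection is covered iff some node dominates the union S of its k sets, and
  |S| \<le> k^2. Orient every pair of nodes at random. A node u \<notin> S dominates S with
  probability 2^-|S|, independently for distinct u because the pairs involved are disjoint, so
  S has no dominator with probability at most (1 - 2^-k^2)^(N - k^2). There are at most n^k
  collections, and k^3 \<le> ln n \<le> k ln N makes N so large that the expected number of
  undominated unions, n^k (1 - 2^-k^2)^(N - k^2) \<le> exp (k ln n - (N - k^2) / 2^k^2), is below 1.
  Probabilities are realised by counting the sets of pairs oriented upwards.
\<close>

lemma card_subsets_with_trace:
  fixes D B g :: "'a set"
  assumes "finite D" "B \<subseteq> D" "g \<subseteq> B" "\<And>F. Q F \<longleftrightarrow> Q (F - B)"
  shows "card {F. F \<subseteq> D \<and> Q F} = card {F. F \<subseteq> D \<and> Q F \<and> F \<inter> B = g} * 2 ^ card B"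
proof -
  define A where "A = {G. G \<subseteq> D - B \<and> Q G}"
  have bij_trace: "bij_betw (\<lambda>F. F - B) {F. F \<subseteq> D \<and> Q F \<and> F \<inter> B = g} A"
  proof (rule bij_betw_byWitness[where f' = "\<lambda>G. G \<union> g"])
    show "(\<lambda>F. F - B) ` {F. F \<subseteq> D \<and> Q F \<and> F \<inter> B = g} \<subseteq> A"
      using assms(4) by (auto simp: A_def)
    show "(\<lambda>G. G \<union> g) ` A \<subseteq> {F. F \<subseteq> D \<and> Q F \<and> F \<inter> B = g}"
    proof
      fix F assume "F \<in> (\<lambda>G. G \<union> g) ` A"
      then obtain G where G: "F = G \<union> g" "G \<subseteq> D - B" "Q G" by (auto simp: A_def)
      moreover have "F - B = G" using G assms(3) by auto
      ultimately show "F \<in> {F. F \<subseteq> D \<and> Q F \<and> F \<inter> B = g}"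
        using assms(2,3) assms(4)[of F] by auto
    qed
    show "\<forall>x \<in> {F. F \<subseteq> D \<and> Q F \<and> F \<inter> B = g}. x - B \<union> g = x" by auto
    show "\<forall>y \<in> A. y \<union> g - B = y" using assms(3) by (auto simp: A_def)
  qed
  have bij_split: "bij_betw (\<lambda>F. (F - B, F \<inter> B)) {F. F \<subseteq> D \<and> Q F} (A \<times> Pow B)"
  proof (rule bij_betw_byWitness[where f' = "\<lambda>(G,H). G \<union> H"])
    show "(\<lambda>F. (F - B, F \<inter> B)) ` {F. F \<subseteq> D \<and> Q F} \<subseteq> A \<times> Pow B"
      using assms(4) by (auto simp: A_def)
    show "(\<lambda>(G,H). G \<union> H) ` (A \<times> Pow B) \<subseteq> {F. F \<subseteq> D \<and> Q F}"
    proof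
      fix F assume "F \<in> (\<lambda>(G,H). G \<union> H) ` (A \<times> Pow B)"
      then obtain G H where GH: "F = G \<union> H" "G \<subseteq> D - B" "Q G" "H \<subseteq> B" by (auto simp: A_def)
      moreover have "F - B = G" using GH by auto
      ultimately show "F \<in> {F. F \<subseteq> D \<and> Q F}"
        using assms(2) assms(4)[of F] by auto
    qed
  qed (auto simp: A_def)
  have "finite B" using assms(1,2) finite_subset by blast
  have "card {F. F \<subseteq> D \<and> Q F} = card (A \<times> Pow B)" using bij_betw_same_card[OF bij_split] .
  also have "\<dots> = card A * 2 ^ card B" by (simp add: card_cartesian_product card_Pow \<open>finite B\<close>)
  also have "card A = card {F. F \<subseteq> D \<and> Q F \<and> F \<inter> B = g}" using bij_betw_same_card[OF bij_trace] by simp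
  finally show ?thesis .
qed

lemma card_subsets_avoiding_traces:
  fixes D :: "'a set" and B g :: "'b \<Rightarrow> 'a set"
  assumes "finite U" "finite D" "\<And>u. u \<in> U \<Longrightarrow> B u \<subseteq> D \<and> g u \<subseteq> B u \<and> card (B u) = s"
    "\<And>u w. u \<in> U \<Longrightarrow> w \<in> U \<Longrightarrow> u \<noteq> w \<Longrightarrow> B u \<inter> B w = {}"
  shows "real (card {F. F \<subseteq> D \<and> (\<forall>u\<in>U. F \<inter> B u \<noteq> g u)}) = 2 ^ card D * (1 - 1 / 2 ^ s) ^ card U"
  using assms(1,3,4)
proof (induction U rule: finite_induct)
  case empty
  then show ?case using assms(2) by (simp add: card_Pow flip: Pow_def)
next
  case (insert u U)
  define Q where "Q F = (\<forall>w\<in>U. F \<inter> B w \<noteq> g w)" for F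
  have IH: "real (card {F. F \<subseteq> D \<and> Q F}) = 2 ^ card D * (1 - 1 / 2 ^ s) ^ card U"
    unfolding Q_def using insert by auto
  have Bu: "B u \<subseteq> D" "g u \<subseteq> B u" "card (B u) = s" using insert by auto
  have QB: "Q F \<longleftrightarrow> Q (F - B u)" for F
  proof -
    have "(F - B u) \<inter> B w = F \<inter> B w" if "w \<in> U" for w
      using insert.prems(2)[of u w] insert.hyps that by auto
    then show ?thesis unfolding Q_def by auto
  qed
  have split: "card {F. F \<subseteq> D \<and> Q F} = card {F. F \<subseteq> D \<and> Q F \<and> F \<inter> B u = g u} * 2 ^ s"
    using card_subsets_with_trace[OF assms(2) Bu(1,2), of Q] QB Bu(3) by simp
  have eq: "{F. F \<subseteq> D \<and> (\<forall>w\<in>insert u U. F \<inter> B w \<noteq> g w)} =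
     {F. F \<subseteq> D \<and> Q F} - {F. F \<subseteq> D \<and> Q F \<and> F \<inter> B u = g u}"
    unfolding Q_def by auto
  have fin: "finite {F. F \<subseteq> D \<and> Q F}" by (rule finite_subset[of _ "Pow D"]) (auto simp: assms(2))
  have "real (card ({F. F \<subseteq> D \<and> Q F} - {F. F \<subseteq> D \<and> Q F \<and> F \<inter> B u = g u}))
      = real (card {F. F \<subseteq> D \<and> Q F}) - real (card {F. F \<subseteq> D \<and> Q F \<and> F \<inter> B u = g u})"
  proof -
    have "card {F. F \<subseteq> D \<and> Q F \<and> F \<inter> B u = g u} \<le> card {F. F \<subseteq> D \<and> Q F}"
      by (rule card_mono[OF fin]) auto
    moreover have "card ({F. F \<subseteq> D \<and> Q F} - {F. F \<subseteq> D \<and> Q F \<and> F \<inter> B u = g u})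
      = card {F. F \<subseteq> D \<and> Q F} - card {F. F \<subseteq> D \<and> Q F \<and> F \<inter> B u = g u}"
      by (rule card_Diff_subset) (auto intro: finite_subset[OF _ fin])
    ultimately show ?thesis by (simp add: of_nat_diff)
  qed
  also have "real (card {F. F \<subseteq> D \<and> Q F \<and> F \<inter> B u = g u}) = real (card {F. F \<subseteq> D \<and> Q F}) / 2 ^ s"
    using split by (simp add: field_simps)
  finally show ?case using eq IH insert.hyps by (simp add: field_simps)
qed

definition node_pairs :: "nat \<Rightarrow> (nat \<times> nat) set" where
  "node_pairs N = {(i, j). i < j \<and> j < N}"

text \<open>\<open>F \<subseteq> node_pairs N\<close> lists the pairs \<open>i < j\<close> oriented from \<open>i\<close> to \<open>j\<close>;
  all other pairs are oriented downwards.\<close>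
definition tournament_of :: "nat \<Rightarrow> (nat \<times> nat) set \<Rightarrow> nat \<Rightarrow> nat \<Rightarrow> bool" where
  "tournament_of N F u v \<longleftrightarrow> (u, v) \<in> F \<or> ((v, u) \<in> node_pairs N \<and> (v, u) \<notin> F)"

definition pairs_joining :: "nat \<Rightarrow> nat set \<Rightarrow> (nat \<times> nat) set" where
  "pairs_joining u S = (\<lambda>v. (min u v, max u v)) ` S"

definition upward_pairs :: "nat \<Rightarrow> nat set \<Rightarrow> (nat \<times> nat) set" where
  "upward_pairs u S = (\<lambda>v. (u, v)) ` {v \<in> S. u < v}"

lemma finite_node_pairs: "finite (node_pairs N)"
  unfolding node_pairs_def by (rule finite_subset[of _ "{0..<N} \<times> {0..<N}"]) auto

lemma node_pairs_subsetD:
  "F \<subseteq> node_pairs N \<Longrightarrow> (i, j) \<in> F \<Longrightarrow> i < j \<and> j < N"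
  unfolding node_pairs_def by blast

lemma tournament_tournament_of:
  assumes "F \<subseteq> node_pairs N"
  shows "tournament N (tournament_of N F)"
  unfolding tournament_def tournament_of_def
  by (auto simp: node_pairs_def dest: node_pairs_subsetD[OF assms])
    (meson node_pairs_subsetD[OF assms] less_asym)

lemma Int_pairs_joining_eq_upward_pairs_iff:
  assumes "u \<notin> S"
  shows "F \<inter> pairs_joining u S = upward_pairs u S \<longleftrightarrow> (\<forall>v\<in>S. (min u v, max u v) \<in> F \<longleftrightarrow> u < v)"
proof
  assume eq: "F \<inter> pairs_joining u S = upward_pairs u S"
  show "\<forall>v\<in>S. (min u v, max u v) \<in> F \<longleftrightarrow> u < v"
  proof
    fix v assume "v \<in> S"
    then have "(min u v, max u v) \<in> pairs_joining u S" unfolding pairs_joining_def by blast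
    moreover have "(min u v, max u v) \<in> upward_pairs u S \<longleftrightarrow> u < v"
      using \<open>v \<in> S\<close> assms unfolding upward_pairs_def by (auto simp: min_def max_def)
    ultimately show "(min u v, max u v) \<in> F \<longleftrightarrow> u < v" using eq by blast
  qed
next
  assume H: "\<forall>v\<in>S. (min u v, max u v) \<in> F \<longleftrightarrow> u < v"
  show "F \<inter> pairs_joining u S = upward_pairs u S"
  proof (intro equalityI subsetI)
    fix p assume "p \<in> F \<inter> pairs_joining u S"
    then obtain v where "v \<in> S" "p = (min u v, max u v)" "p \<in> F"
      unfolding pairs_joining_def by blast
    with H have "u < v" by blast
    with \<open>v \<in> S\<close> \<open>p = _\<close> show "p \<in> upward_pairs u S" unfolding upward_pairs_def by auto
  next
    fix p assume "p \<in> upward_pairs u S"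
    then obtain v where "v \<in> S" "u < v" "p = (min u v, max u v)"
      unfolding upward_pairs_def by auto
    with H show "p \<in> F \<inter> pairs_joining u S" unfolding pairs_joining_def by blast
  qed
qed

lemma dominates_tournament_of_iff:
  assumes "F \<subseteq> node_pairs N" and "S \<subseteq> {0..<N}" and "u < N" and "u \<notin> S"
  shows "dominates (tournament_of N F) u S \<longleftrightarrow> F \<inter> pairs_joining u S = upward_pairs u S"
proof -
  have "tournament_of N F u v \<longleftrightarrow> ((min u v, max u v) \<in> F \<longleftrightarrow> u < v)" if "v \<in> S" for v
    using assms(2-4) that unfolding tournament_of_def
    by (cases u v rule: linorder_cases) (auto simp: node_pairs_def dest: node_pairs_subsetD[OF assms(1)])
  then show ?thesis
    unfolding dominates_def Int_pairs_joining_eq_upward_pairs_iff[OF assms(4)] by blast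
qed

definition undominated_orientations :: "nat \<Rightarrow> nat set \<Rightarrow> (nat \<times> nat) set set" where
  "undominated_orientations N S =
     {F. F \<subseteq> node_pairs N \<and> (\<forall>u\<in>{0..<N} - S. \<not> dominates (tournament_of N F) u S)}"

lemma card_undominated_orientations:
  assumes "S \<subseteq> {0..<N}"
  shows "real (card (undominated_orientations N S))
    = 2 ^ card (node_pairs N) * (1 - 1 / 2 ^ card S) ^ (N - card S)"
proof -
  have "undominated_orientations N S
      = {F. F \<subseteq> node_pairs N \<and> (\<forall>u\<in>{0..<N} - S. F \<inter> pairs_joining u S \<noteq> upward_pairs u S)}"
    unfolding undominated_orientations_def
  proof (rule Collect_cong)
    fix F
    show "F \<subseteq> node_pairs N \<and> (\<forall>u\<in>{0..<N} - S. \<not> dominates (tournament_of N F) u S) \<longleftrightarrow>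
        F \<subseteq> node_pairs N \<and> (\<forall>u\<in>{0..<N} - S. F \<inter> pairs_joining u S \<noteq> upward_pairs u S)"
    proof (rule conj_cong[OF refl], rule ball_cong[OF refl])
      fix u assume F: "F \<subseteq> node_pairs N" and u: "u \<in> {0..<N} - S"
      show "\<not> dominates (tournament_of N F) u S \<longleftrightarrow> F \<inter> pairs_joining u S \<noteq> upward_pairs u S"
        using dominates_tournament_of_iff[OF F assms, of u] u by simp
    qed
  qed
  also have "real (card \<dots>) = 2 ^ card (node_pairs N) * (1 - 1 / 2 ^ card S) ^ card ({0..<N} - S)"
  proof (rule card_subsets_avoiding_traces)
    fix u assume u: "u \<in> {0..<N} - S"
    show "pairs_joining u S \<subseteq> node_pairs N \<and> upward_pairs u S \<subseteq> pairs_joining u S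
        \<and> card (pairs_joining u S) = card S"
    proof (intro conjI)
      show "pairs_joining u S \<subseteq> node_pairs N"
        using u assms unfolding pairs_joining_def node_pairs_def
        by (auto simp: min_def max_def) (metis le_neq_implies_less)
      show "upward_pairs u S \<subseteq> pairs_joining u S"
        unfolding upward_pairs_def pairs_joining_def by force
      show "card (pairs_joining u S) = card S"
        using u unfolding pairs_joining_def
        by (intro card_image) (auto simp: inj_on_def min_def max_def split: if_splits)
    qed
  next
    show "pairs_joining u S \<inter> pairs_joining w S = {}"
      if "u \<in> {0..<N} - S" "w \<in> {0..<N} - S" "u \<noteq> w" for u w
      using that unfolding pairs_joining_def by (auto simp: min_def max_def split: if_splits)
  qed (auto simp: finite_node_pairs)
  also have "card ({0..<N} - S) = N - card S"
    using assms by (simp add: card_Diff_subset finite_subset)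
  finally show ?thesis .
qed

lemma card_undominated_orientations_le:
  assumes "S \<subseteq> {0..<N}" and "card S \<le> m"
  shows "real (card (undominated_orientations N S))
    \<le> 2 ^ card (node_pairs N) * (1 - 1 / 2 ^ m) ^ (N - m)"
proof -
  have "(1 - 1 / 2 ^ card S :: real) ^ (N - card S) \<le> (1 - 1 / 2 ^ m) ^ (N - card S)"
    using assms(2) by (intro power_mono) (auto intro: divide_left_mono power_increasing)
  also have "\<dots> \<le> (1 - 1 / 2 ^ m) ^ (N - m)"
    using assms(2) by (intro power_decreasing) auto
  finally show ?thesis by (simp add: card_undominated_orientations[OF assms(1)])
qed

lemma exists_subset_avoiding:
  fixes B :: "'i \<Rightarrow> 'a set set"
  assumes "finite D" and "finite I" and "\<And>i. i \<in> I \<Longrightarrow> B i \<subseteq> Pow D"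
    and "(\<Sum>i\<in>I. real (card (B i))) < 2 ^ card D"
  shows "\<exists>F\<subseteq>D. \<forall>i\<in>I. F \<notin> B i"
proof -
  have "real (card (\<Union>i\<in>I. B i)) \<le> (\<Sum>i\<in>I. real (card (B i)))"
    using of_nat_mono[OF card_UN_le[OF assms(2), of B]] by simp
  also have "\<dots> < real (card (Pow D))" using assms(1,4) by (simp add: card_Pow)
  finally have "card (\<Union>i\<in>I. B i) < card (Pow D)" by linarith
  moreover have "finite (\<Union>i\<in>I. B i)"
    using assms(1,3) by (meson UN_least finite_Pow_iff finite_subset)
  ultimately have "\<not> Pow D \<subseteq> (\<Union>i\<in>I. B i)" using card_mono leD by blast
  then show ?thesis by blast
qed

lemma GT_k_covered_if_dominated:
  assumes "\<And>\<W>. \<W> \<subseteq> {X. X \<subseteq> {0..<N} \<and> card X = k} \<Longrightarrow> card \<W> = k \<Longrightarrow>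
      \<exists>u<N. \<forall>X\<in>\<W>. dominates E u X"
  shows "GT_k_covered N k E"
  unfolding GT_k_covered_def k_covered_def covered_def
proof (intro allI impI)
  fix W assume W: "(W \<subseteq> G_R N \<or> W \<subseteq> G_C N k) \<and> card W = k"
  show "\<exists>y\<in>G_R N \<union> G_C N k. \<forall>w\<in>W. G_arc N k E w y"
  proof (cases "W \<subseteq> G_R N")
    case True
    then obtain X where "W = Inl ` X" "X \<subseteq> {0..<N}" unfolding G_R_def by (meson subset_imageE)
    moreover from this have "card X = k" using W by (simp add: card_image)
    ultimately show ?thesis unfolding G_arc_def G_R_def G_C_def by auto
  next
    case False
    then have "W \<subseteq> G_C N k" using W by blast
    then obtain \<W> where \<W>: "W = Inr ` \<W>" "\<W> \<subseteq> {X. X \<subseteq> {0..<N} \<and> card X = k}"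
      unfolding G_C_def by (meson subset_imageE)
    moreover from this have "card \<W> = k" using W by (simp add: card_image)
    ultimately obtain u where "u < N" "\<forall>X\<in>\<W>. dominates E u X" using assms by blast
    with \<W> show ?thesis unfolding G_arc_def G_R_def G_C_def by (intro bexI[of _ "Inl u"]) auto
  qed
qed

lemma binomial_le_real_pow: "real (n choose k) \<le> real n ^ k"
  by (cases "k \<le> n") (simp_all add: binomial_le_pow binomial_eq_0 flip: of_nat_power)

lemma exists_k_covered_tournament:
  assumes "real (N choose k) ^ k * (1 - 1 / 2 ^ (k^2)) ^ (N - k^2) < 1"
  shows "\<exists>E. tournament N E \<and> GT_k_covered N k E"
proof -
  define q :: real where "q = (1 - 1 / 2 ^ (k^2)) ^ (N - k^2)"
  define KS where "KS = {X. X \<subseteq> {0..<N} \<and> card X = k}"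
  define Fam where "Fam = {\<W>. \<W> \<subseteq> KS \<and> card \<W> = k}"
  have "finite KS" unfolding KS_def by (rule finite_subset[of _ "Pow {0..<N}"]) auto
  then have "finite Fam" and card_Fam: "card Fam = (N choose k) choose k"
    unfolding Fam_def using n_subsets[of KS k] n_subsets[of "{0..<N}" k]
    by (auto simp: KS_def intro: finite_subset[of _ "Pow KS"])
  have union_small: "\<Union>\<W> \<subseteq> {0..<N} \<and> card (\<Union>\<W>) \<le> k^2" if "\<W> \<in> Fam" for \<W>
  proof -
    have "card (\<Union>\<W>) \<le> (\<Sum>X\<in>\<W>. card X)" by (rule card_Union_le_sum_card)
    also have "\<dots> = k^2" using that unfolding Fam_def KS_def by (simp add: subset_iff power2_eq_square)
    finally show ?thesis using that unfolding Fam_def KS_def by auto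
  qed
  have "(\<Sum>\<W>\<in>Fam. real (card (undominated_orientations N (\<Union>\<W>))))
      \<le> (\<Sum>\<W>\<in>Fam. 2 ^ card (node_pairs N) * q)"
    unfolding q_def using union_small by (intro sum_mono card_undominated_orientations_le) auto
  also have "\<dots> = 2 ^ card (node_pairs N) * (real ((N choose k) choose k) * q)"
    by (simp add: card_Fam)
  also have "\<dots> \<le> 2 ^ card (node_pairs N) * (real (N choose k) ^ k * q)"
    unfolding q_def by (intro mult_left_mono mult_right_mono binomial_le_real_pow) auto
  also have "\<dots> < 2 ^ card (node_pairs N)" using assms unfolding q_def by simp
  finally have sum_less:
    "(\<Sum>\<W>\<in>Fam. real (card (undominated_orientations N (\<Union>\<W>)))) < 2 ^ card (node_pairs N)" .
  have "undominated_orientations N S \<subseteq> Pow (node_pairs N)" for S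
    unfolding undominated_orientations_def by blast
  then obtain F where F: "F \<subseteq> node_pairs N"
    and good: "\<forall>\<W>\<in>Fam. F \<notin> undominated_orientations N (\<Union>\<W>)"
    using exists_subset_avoiding[OF finite_node_pairs[of N] \<open>finite Fam\<close> _ sum_less] by blast
  have "GT_k_covered N k (tournament_of N F)"
  proof (rule GT_k_covered_if_dominated)
    fix \<W> assume "\<W> \<subseteq> {X. X \<subseteq> {0..<N} \<and> card X = k}" and "card \<W> = k"
    then have "F \<notin> undominated_orientations N (\<Union>\<W>)"
      using good unfolding Fam_def KS_def by blast
    then obtain u where "u < N" "dominates (tournament_of N F) u (\<Union>\<W>)"
      using F unfolding undominated_orientations_def by auto
    then show "\<exists>u<N. \<forall>X\<in>\<W>. dominates (tournament_of N F) u X"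
      unfolding dominates_def by blast
  qed
  then show ?thesis using tournament_tournament_of[OF F] by blast
qed

lemma eventually_exp_dominates: "eventually (\<lambda>x::real. x^2 * 2 powr x + x < exp x) at_top"
proof -
  have "eventually (\<lambda>x::real. x^2 + x < exp ((1 - ln 2) * x)) at_top"
    using ln_2_less_1 by real_asymp
  then show ?thesis
    using eventually_ge_at_top[of 0]
  proof eventually_elim
    case (elim x)
    have "1 \<le> 2 powr x" using elim(2) by (simp add: ge_one_powr_ge_zero)
    then have "x^2 * 2 powr x + x \<le> (x^2 + x) * 2 powr x"
      using elim(2) by (simp add: algebra_simps mult_le_cancel_left1)
    also have "\<dots> < exp ((1 - ln 2) * x) * exp (x * ln 2)"
      using elim(1) by (simp add: powr_def)
    also have "\<dots> = exp x" by (simp flip: exp_add add: algebra_simps)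
    finally show ?case .
  qed
qed

lemma nodes_lower_bound:
  fixes N k n :: nat and x0 :: real
  assumes dominates: "\<And>x. x0 \<le> x \<Longrightarrow> x^2 * 2 powr x + x < exp x"
    and "1 \<le> x0" and "0 < k" and "exp (x0^2) \<le> n" and "n \<le> N ^ k"
    and "real k \<le> root 3 (ln n)"
  shows "real k * ln n * 2 ^ (k^2) + k^2 < N"
proof -
  have "0 < n" using assms(4) by (smt (verit) exp_gt_zero of_nat_0_less_iff)
  have "x0^2 = ln (exp (x0^2))" by simp
  also have "\<dots> \<le> ln n" by (rule ln_mono[OF assms(4) exp_gt_zero])
  finally have "x0^2 \<le> ln n" .
  define L where "L = ln (real n)"
  define m where "m = k^2"
  \<comment> \<open>\<open>k^3 \<le> L\<close> gives \<open>m \<le> x\<close> and \<open>k L \<le> x^2\<close>, while \<open>L \<le> k ln N\<close> gives \<open>exp x \<le> N\<close>\<close>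
  define x where "x = L / k"
  have L_ge: "1 \<le> L" using assms(2) \<open>x0^2 \<le> ln n\<close> unfolding L_def by (smt (verit) one_le_power)
  have "0 < N" using assms(3,5) \<open>0 < n\<close> by (cases "N = 0") (auto simp: power_0_left)
  have "L \<le> ln (real N ^ k)" unfolding L_def using assms(5) \<open>0 < n\<close> \<open>0 < N\<close>
    by (subst ln_le_cancel_iff) (auto simp flip: of_nat_power)
  then have L_le: "L \<le> k * ln N" using \<open>0 < N\<close> by (simp add: ln_realpow)
  have "real k ^ 3 \<le> root 3 L ^ 3" using assms(6) unfolding L_def by (intro power_mono) auto
  then have "real k ^ 3 \<le> L" using L_ge by (simp add: real_root_pow_pos2)
  then have m_le_x: "real m \<le> x" using assms(3) unfolding m_def x_def by (simp add: field_simps power_def)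
  have L_eq: "L = real k * x" using assms(3) unfolding x_def by simp
  have "real k \<le> real m" using assms(3) unfolding m_def by (simp add: power2_eq_square)
  have "0 \<le> x" using m_le_x by (smt (verit) of_nat_0_le_iff)
  have "real k * L = real m * x" unfolding L_eq m_def by (simp add: power2_eq_square)
  also have "\<dots> \<le> x^2" using m_le_x \<open>0 \<le> x\<close> by (simp add: power2_eq_square mult_right_mono)
  finally have kL_le: "real k * L \<le> x^2" .
  have "L \<le> x^2" using \<open>real k \<le> real m\<close> m_le_x \<open>0 \<le> x\<close> unfolding L_eq power2_eq_square
    by (simp add: mult_right_mono)
  then have "x0^2 \<le> x^2" using \<open>x0^2 \<le> ln n\<close> unfolding L_def by linarith
  then have "x0 \<le> x" using \<open>0 \<le> x\<close> by (rule power2_le_imp_le)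
  have "x \<le> ln N" using L_le assms(3) unfolding L_eq by (simp add: mult_le_cancel_left_pos)
  then have "exp x \<le> exp (ln N)" by simp
  then have "exp x \<le> N" using \<open>0 < N\<close> by simp
  have "2 ^ m \<le> 2 powr x" using m_le_x by (metis powr_mono powr_realpow one_le_numeral zero_less_numeral)
  then have "real k * L * 2 ^ m + real m \<le> x^2 * 2 powr x + x"
    using kL_le m_le_x by (intro add_mono mult_mono) auto
  also have "\<dots> < exp x" using dominates \<open>x0 \<le> x\<close> .
  finally show ?thesis using \<open>exp x \<le> N\<close> unfolding L_def m_def by simp
qed

lemma power_mult_one_minus_inverse_power_lt_one:
  fixes n N k m :: nat
  assumes "0 < n" and "real k * ln n * 2 ^ m + m < N"
  shows "real n ^ k * (1 - 1 / 2 ^ m) ^ (N - m) < 1"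
proof -
  have "0 \<le> real k * ln n * 2 ^ m" using assms(1) by simp
  with assms(2) have "m < N" and kL_less: "real k * ln n < (real N - real m) / 2 ^ m"
    by (simp_all add: pos_less_divide_eq)
  have "(1 - 1 / 2 ^ m :: real) ^ (N - m) \<le> exp (- (1 / 2 ^ m)) ^ (N - m)"
    by (intro power_mono) (use exp_ge_add_one_self[of "- (1 / 2 ^ m)"] in auto)
  also have "\<dots> = exp (- (real N - real m) / 2 ^ m)"
    using \<open>m < N\<close> by (simp add: of_nat_diff field_simps flip: exp_of_nat_mult)
  finally have "real n ^ k * (1 - 1 / 2 ^ m) ^ (N - m)
      \<le> exp (real k * ln n) * exp (- (real N - real m) / 2 ^ m)"
    using assms(1) by (simp add: exp_of_nat_mult mult_left_mono)
  also have "\<dots> < 1" using kL_less by (simp add: diff_divide_distrib flip: exp_add)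
  finally show ?thesis .
qed

theorem lemma1:
  shows "\<exists>n0::nat. \<forall>N k :: nat.
           0 < N \<and> 0 < k \<and> k \<le> N \<and> N choose k \<ge> n0 \<and>
           real k \<le> root 3 (ln (real (N choose k)))
           \<longrightarrow> (\<exists>E. tournament N E \<and> GT_k_covered N k E)"
proof -
  obtain x0 :: real where x0: "\<And>x. x0 \<le> x \<Longrightarrow> x^2 * 2 powr x + x < exp x"
    using eventually_exp_dominates by (auto simp: eventually_at_top_linorder)
  define x1 where "x1 = max x0 1"
  have x1_dom: "\<And>x. x1 \<le> x \<Longrightarrow> x^2 * 2 powr x + x < exp x" and "1 \<le> x1"
    using x0 unfolding x1_def by auto
  show ?thesis
  proof (rule exI[of _ "nat \<lceil>exp (x1^2)\<rceil>"], intro allI impI)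
    fix N k :: nat
    assume asm: "0 < N \<and> 0 < k \<and> k \<le> N \<and> nat \<lceil>exp (x1^2)\<rceil> \<le> N choose k \<and>
      real k \<le> root 3 (ln (real (N choose k)))"
    define n where "n = N choose k"
    have "exp (x1^2) \<le> n" using asm by (simp add: n_def nat_ceiling_le_eq)
    then have "0 < n" by (smt (verit) exp_gt_zero of_nat_0_less_iff)
    moreover have "n \<le> N ^ k" using asm by (simp add: n_def binomial_le_pow)
    then have "real k * ln n * 2 ^ (k^2) + k^2 < N"
      using nodes_lower_bound[OF x1_dom \<open>1 \<le> x1\<close> _ \<open>exp (x1^2) \<le> n\<close>] asm unfolding n_def by blast
    ultimately have "real n ^ k * (1 - 1 / 2 ^ (k^2)) ^ (N - k^2) < 1"
      by (rule power_mult_one_minus_inverse_power_lt_one)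
    then show "\<exists>E. tournament N E \<and> GT_k_covered N k E"
      unfolding n_def by (rule exists_k_covered_tournament)
  qed
qed

end
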